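(* Let $\widehat P$ be any transition kernel on finite $\mathcal S\times\mathcal A$, $r:\mathcal S\times\mathcal A\to[0,1]$, $n\ge2$ an integer, $s_0\in\mathcal S$, and $\underline{\widehat P}=(1-\frac1n)\widehat P+\frac1n\mathbf 1e_{s_0}^\top$. If a policy $\pi$ is greedy with respect to $r+\underline{\widehat P}h$ for some $h\in\mathbb R^{\mathcal S}$, then $$\widehat V^\star_{1-\frac1n}-\widehat V^\pi_{1-\frac1n}\le(n-1)\,\|\underline{\widehat h}^\star-h\|_{\mathrm{sp}}\,\mathbf 1 .$$
   Context: $\underline{\widehat P}(s'|s,a)=(1-\frac1n)\widehat P(s'|s,a)+\frac1n\mathbb 1\{s'=s_0\}$. For $x\in\mathbb R^{\mathcal S\times\mathcal A}$, a policy $\pi$ is greedy with respect to $x$ if $\sum_a\pi(a|s)x(s,a)=\max_ax(s,a)$ for all $s$; here $(r+\underline{\widehat P}h)(s,a)=r(s,a)+\sum_{s'}\underline{\widehat P}(s'|s,a)h(s')$. $\widehat V^\pi_\gamma=(I-\gamma\widehat P_\pi)^{-1}r_\pi$ and $\widehat V^\star_\gamma=\max_\pi\widehat V^\pi_\gamma$, with $\widehat P_\pi(s,s')=\sum_a\pi(a|s)\widehat P(s'|s,a)$, $r_\pi(s)=\sum_a\pi(a|s)r(s,a)$. $\underline{\widehat h}^\star$ is the optimal bias of the average-reward MDP $(\underline{\widehat P},r)$ (bias $\mathrm{C\text{-}lim}_T\sum_{t<T}(Q_\pi^tr_\pi-Q^\infty_\pi r_\pi)$ with $Q=\underline{\widehat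 P}$ of a Blackwell-optimal policy). $\|x\|_{\mathrm{sp}}=\max x-\min x$. *)

theory Defs
  imports "HOL-Analysis.Analysis"
begin

definition is_kernel :: "('s::finite \<Rightarrow> 'a::finite \<Rightarrow> 's \<Rightarrow> real) \<Rightarrow> bool" where
  "is_kernel P \<longleftrightarrow> (\<forall>s a s'. 0 \<le> P s a s') \<and> (\<forall>s a. (\<Sum>s'\<in>UNIV. P s a s') = 1)"

definition is_policy :: "('s::finite \<Rightarrow> 'a::finite \<Rightarrow> real) \<Rightarrow> bool" where
  "is_policy pol \<longleftrightarrow> (\<forall>s a. 0 \<le> pol s a) \<and> (\<forall>s. (\<Sum>a\<in>UNIV. pol s a) = 1)"

definition Ppi :: "('s::finite \<Rightarrow> 'a::finite \<Rightarrow> 's \<Rightarrow> real) \<Rightarrow> ('s \<Rightarrow> 'a \<Rightarrow> real) \<Rightarrow> real^'s^'s" where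
  "Ppi P pol = (\<chi> s s'. \<Sum>a\<in>UNIV. pol s a * P s a s')"

definition rpi :: "('s::finite \<Rightarrow> 'a::finite \<Rightarrow> real) \<Rightarrow> ('s \<Rightarrow> 'a \<Rightarrow> real) \<Rightarrow> real^'s" where
  "rpi r pol = (\<chi> s. \<Sum>a\<in>UNIV. pol s a * r s a)"

definition Vpi :: "real \<Rightarrow> ('s::finite \<Rightarrow> 'a::finite \<Rightarrow> 's \<Rightarrow> real) \<Rightarrow> ('s \<Rightarrow> 'a \<Rightarrow> real)
                   \<Rightarrow> ('s \<Rightarrow> 'a \<Rightarrow> real) \<Rightarrow> real^'s" where
  "Vpi \<gamma> P r pol = matrix_inv (mat 1 - \<gamma> *\<^sub>R Ppi P pol) *v rpi r pol"

definition Vstar :: "real \<Rightarrow> ('s::finite \<Rightarrow> 'a::finite \<Rightarrow> 's \<Rightarrow> real) \<Rightarrow> ('s \<Rightarrow> 'a \<Rightarrow> real) \<Rightarrow> real^'s" where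
  "Vstar \<gamma> P r = (\<chi> s. SUP pol\<in>{pol. is_policy pol}. Vpi \<gamma> P r pol $ s)"

definition anchored :: "nat \<Rightarrow> 's \<Rightarrow> ('s \<Rightarrow> 'a \<Rightarrow> 's \<Rightarrow> real) \<Rightarrow> ('s \<Rightarrow> 'a \<Rightarrow> 's \<Rightarrow> real)" where
  "anchored n s0 P = (\<lambda>s a s'. (1 - 1 / real n) * P s a s' + (1 / real n) * (if s' = s0 then 1 else 0))"

definition qval :: "('s::finite \<Rightarrow> 'a \<Rightarrow> real) \<Rightarrow> ('s \<Rightarrow> 'a \<Rightarrow> 's \<Rightarrow> real) \<Rightarrow> ('s \<Rightarrow> real) \<Rightarrow> 's \<Rightarrow> 'a \<Rightarrow> real" where
  "qval r Q h = (\<lambda>s a. r s a + (\<Sum>s'\<in>UNIV. Q s a s' * h s'))"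

definition greedy :: "('s \<Rightarrow> 'a::finite \<Rightarrow> real) \<Rightarrow> ('s \<Rightarrow> 'a \<Rightarrow> real) \<Rightarrow> bool" where
  "greedy pol x \<longleftrightarrow> (\<forall>s. (\<Sum>a\<in>UNIV. pol s a * x s a) = Max (range (x s)))"

definition sp_norm :: "('s::finite \<Rightarrow> real) \<Rightarrow> real" where
  "sp_norm x = Max (range x) - Min (range x)"

definition cesaro_lim :: "(nat \<Rightarrow> real^'s::finite) \<Rightarrow> real^'s" where
  "cesaro_lim X = lim (\<lambda>T. (1 / real T) *\<^sub>R (\<Sum>t<T. X t))"

definition bias :: "('s::finite \<Rightarrow> 'a::finite \<Rightarrow> 's \<Rightarrow> real) \<Rightarrow> ('s \<Rightarrow> 'a \<Rightarrow> real)
                    \<Rightarrow> ('s \<Rightarrow> 'a \<Rightarrow> real) \<Rightarrow> real^'s" where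
  "bias Q r pol =
     (let pw = (\<lambda>t. ((\<lambda>v. Ppi Q pol *v v) ^^ t) (rpi r pol));
          ginf = cesaro_lim pw
      in cesaro_lim (\<lambda>T. \<Sum>t<T. pw t - ginf))"

definition blackwell_optimal :: "('s::finite \<Rightarrow> 'a::finite \<Rightarrow> 's \<Rightarrow> real) \<Rightarrow> ('s \<Rightarrow> 'a \<Rightarrow> real)
                    \<Rightarrow> ('s \<Rightarrow> 'a \<Rightarrow> real) \<Rightarrow> bool" where
  "blackwell_optimal Q r pol \<longleftrightarrow> is_policy pol \<and>
     (\<exists>\<gamma>0<1. \<forall>\<gamma>. \<gamma>0 < \<gamma> \<and> \<gamma> < 1 \<longrightarrow>
        (\<forall>pol'. is_policy pol' \<longrightarrow> (\<forall>s. Vpi \<gamma> Q r pol' $ s \<le> Vpi \<gamma> Q r pol $ s)))"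

definition optimal_bias :: "('s::finite \<Rightarrow> 'a::finite \<Rightarrow> 's \<Rightarrow> real) \<Rightarrow> ('s \<Rightarrow> 'a \<Rightarrow> real) \<Rightarrow> real^'s" where
  "optimal_bias Q r = bias Q r (SOME pol. blackwell_optimal Q r pol)"

end

theory Submission
  imports Defs "HOL-Computational_Algebra.Polynomial"
begin


text \<open>
  The anchored kernel restarts in \<open>s0\<close> with probability \<open>1/n\<close>, so with \<open>\<gamma> = 1 - 1/n\<close> its
  \<open>\<beta>\<close>-discounted value is the \<open>\<beta>\<gamma>\<close>-discounted value of \<open>P\<close> plus a constant multiple of the
  value in \<open>s0\<close>. Discounted values are rational functions of the discount factor, so the comparisons
  between the finitely many deterministic policies eventually have constant sign. This yields
  Blackwell-optimal policies and shows that a Blackwell-optimal policy \<open>b\<close> of the anchored MDP is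
  optimal for \<open>P\<close> at all discounts just below \<open>\<gamma>\<close>, hence, by continuity, at \<open>\<gamma>\<close>. The anchored
  chain contracts spans by the factor \<open>\<gamma>\<close>, so \<open>V\<^sup>b\<^sub>\<gamma>\<close> solves its Poisson equation and the optimal
  bias is \<open>V\<^sup>b\<^sub>\<gamma>\<close> up to a constant. What remains is the classical bound
  \<open>V\<^sup>b\<^sub>\<gamma> - V\<^sup>\<pi>\<^sub>\<gamma> \<le> \<gamma>/(1-\<gamma>) \<cdot> sp(V\<^sup>b\<^sub>\<gamma> - h)\<close> for \<open>\<pi>\<close> greedy for \<open>r + \<gamma> P h\<close>, which
  follows from the maximum principle for \<open>\<gamma> P\<^sub>\<pi>\<close>; greediness for \<open>r + \<gamma> P h\<close> and for the anchored
  \<open>r + P h\<close> coincide because the two differ by the constant \<open>h s0 / n\<close>, and \<open>\<gamma>/(1-\<gamma>) = n - 1\<close>.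
\<close>

section \<open>Stochastic matrices and discounted values\<close>

definition stochastic :: "real^'n::finite^'n \<Rightarrow> bool" where
  "stochastic K \<longleftrightarrow> (\<forall>i j. 0 \<le> K$i$j) \<and> (\<forall>i. (\<Sum>j\<in>UNIV. K$i$j) = 1)"

definition disc_value :: "real \<Rightarrow> real^'n::finite^'n \<Rightarrow> real^'n \<Rightarrow> real^'n" where
  "disc_value x K c = matrix_inv (mat 1 - x *\<^sub>R K) *v c"

lemma matrix_vector_mult_component: "(K *v v) $ i = (\<Sum>j\<in>UNIV. K$i$j * v$j)"
  by (simp add: matrix_vector_mult_def)

lemma I_minus_scaled_mult_component:
  "((mat 1 - x *\<^sub>R K) *v v) $ i = v$i - x * (K *v v)$i" for K :: "real^'n::finite^'n"
  by (simp add: matrix_vector_mult_diff_rdistrib scaleR_matrix_vector_assoc[symmetric])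

lemma stochastic_mult_one: "stochastic K \<Longrightarrow> K *v 1 = 1"
  by (simp add: vec_eq_iff matrix_vector_mult_component stochastic_def)

lemma stochastic_mult_add_const:
  assumes "stochastic K" shows "(K *v (v + c *\<^sub>R 1))$i = (K *v v)$i + c"
  using assms
  by (simp add: matrix_vector_mult_component distrib_left sum.distrib stochastic_def sum_distrib_right[symmetric])

lemma stochastic_mult_le_Max:
  assumes "stochastic K" shows "(K *v v)$i \<le> Max (range (\<lambda>j. v$j))"
proof -
  have "(K *v v)$i \<le> (\<Sum>j\<in>UNIV. K$i$j * Max (range (\<lambda>j. v$j)))"
    unfolding matrix_vector_mult_component
    using assms by (intro sum_mono mult_left_mono) (auto simp: stochastic_def)
  also have "\<dots> = Max (range (\<lambda>j. v$j))"
    using assms by (simp add: stochastic_def sum_distrib_right[symmetric])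
  finally show ?thesis .
qed

lemma stochastic_mult_ge_Min:
  assumes "stochastic K" shows "Min (range (\<lambda>j. v$j)) \<le> (K *v v)$i"
proof -
  have "Min (range (\<lambda>j. v$j)) = (\<Sum>j\<in>UNIV. K$i$j * Min (range (\<lambda>j. v$j)))"
    using assms by (simp add: stochastic_def sum_distrib_right[symmetric])
  also have "\<dots> \<le> (K *v v)$i"
    unfolding matrix_vector_mult_component
    using assms by (intro sum_mono mult_left_mono) (auto simp: stochastic_def)
  finally show ?thesis .
qed

lemma stochastic_max_principle:
  fixes K :: "real^'n::finite^'n"
  assumes "stochastic K" "0 \<le> x" "x < 1" "\<forall>i. D$i \<le> a + x * (K *v D)$i"
  shows "D$i \<le> a / (1 - x)"
proof -
  define M where "M = Max (range (\<lambda>j. D$j))"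
  obtain i0 where i0: "D$i0 = M"
    using Max_in[of "range (\<lambda>j. D$j)"] unfolding M_def by (auto simp del: Max_in)
  have "M \<le> a + x * M"
    using assms(4)[rule_format, of i0] mult_left_mono[OF stochastic_mult_le_Max[OF assms(1), of D i0] assms(2)] i0
    unfolding M_def by linarith
  then have "M \<le> a / (1 - x)" using assms(3) by (simp add: pos_le_divide_eq algebra_simps)
  moreover have "D$i \<le> M" unfolding M_def by simp
  ultimately show ?thesis by simp
qed

lemma stochastic_min_principle:
  fixes K :: "real^'n::finite^'n"
  assumes "stochastic K" "0 \<le> x" "x < 1" "\<forall>i. a + x * (K *v D)$i \<le> D$i"
  shows "a / (1 - x) \<le> D$i"
proof -
  have "\<forall>i. (- D)$i \<le> - a + x * (K *v (- D))$i"
  proof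
    fix j have "a + x * (K *v D)$j \<le> D$j" using assms(4) by blast
    then show "(- D)$j \<le> - a + x * (K *v (- D))$j"
      by (simp add: matrix_vector_mult_component sum_negf)
  qed
  from stochastic_max_principle[OF assms(1-3) this, of i] show ?thesis by simp
qed

lemma det_I_minus_scaled_stochastic_nonzero:
  fixes K :: "real^'n::finite^'n"
  assumes "stochastic K" "0 \<le> x" "x < 1"
  shows "det (mat 1 - x *\<^sub>R K) \<noteq> 0"
proof -
  have "v = 0" if "(mat 1 - x *\<^sub>R K) *v v = 0" for v
  proof -
    have "\<forall>i. v$i = x * (K *v v)$i"
      using that by (simp add: vec_eq_iff I_minus_scaled_mult_component)
    then have "\<forall>i. v$i \<le> 0 + x * (K *v v)$i" "\<forall>i. 0 + x * (K *v v)$i \<le> v$i"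
      by simp_all
    from stochastic_max_principle[OF assms this(1)] stochastic_min_principle[OF assms this(2)]
    have "v$i \<le> 0" "0 \<le> v$i" for i by simp_all
    then show ?thesis by (simp add: vec_eq_iff order.antisym)
  qed
  then show ?thesis
    by (simp add: invertible_det_nz[symmetric] invertible_left_inverse matrix_left_invertible_ker)
qed

lemma disc_value_iff:
  fixes K :: "real^'n::finite^'n"
  assumes "stochastic K" "0 \<le> x" "x < 1"
  shows "u = disc_value x K c \<longleftrightarrow> (\<forall>i. u$i = c$i + x * (K *v u)$i)"
proof -
  let ?A = "mat 1 - x *\<^sub>R K"
  have "\<exists>A'. ?A ** A' = mat 1 \<and> A' ** ?A = mat 1"
    using det_I_minus_scaled_stochastic_nonzero[OF assms]
    by (simp add: invertible_det_nz[symmetric] invertible_def)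
  from someI_ex[OF this] have "?A ** matrix_inv ?A = mat 1" "matrix_inv ?A ** ?A = mat 1"
    unfolding matrix_inv_def by auto
  then have "u = disc_value x K c \<longleftrightarrow> ?A *v u = c"
    unfolding disc_value_def by (metis matrix_vector_mul_assoc matrix_vector_mul_lid)
  also have "\<dots> \<longleftrightarrow> (\<forall>i. u$i - x * (K *v u)$i = c$i)"
    by (simp only: vec_eq_iff I_minus_scaled_mult_component)
  finally show ?thesis by (auto simp: algebra_simps)
qed

lemma disc_value_fixpoint:
  fixes K :: "real^'n::finite^'n"
  assumes "stochastic K" "0 \<le> x" "x < 1"
  shows "disc_value x K c $ i = c$i + x * (K *v disc_value x K c)$i"
  using disc_value_iff[OF assms, of "disc_value x K c" c] by blast

lemma disc_value_solves:
  fixes K :: "real^'n::finite^'n"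
  assumes "stochastic K" "0 \<le> x" "x < 1"
  shows "(mat 1 - x *\<^sub>R K) *v disc_value x K c = c"
  using disc_value_fixpoint[OF assms] by (simp add: vec_eq_iff I_minus_scaled_mult_component)

lemma disc_value_le_supersolution:
  fixes K :: "real^'n::finite^'n"
  assumes "stochastic K" "0 \<le> x" "x < 1" "\<forall>i. c$i + x * (K *v w)$i \<le> w$i"
  shows "disc_value x K c $ i \<le> w $ i"
proof -
  have "\<forall>i. (disc_value x K c - w)$i \<le> 0 + x * (K *v (disc_value x K c - w))$i"
    using assms(4) disc_value_fixpoint[OF assms(1-3), of c]
    by (auto simp: matrix_vector_mult_diff_distrib algebra_simps)
  from stochastic_max_principle[OF assms(1-3) this] show ?thesis by simp
qed

lemma disc_value_ge_subsolution:
  fixes K :: "real^'n::finite^'n"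
  assumes "stochastic K" "0 \<le> x" "x < 1" "\<forall>i. w$i \<le> c$i + x * (K *v w)$i"
  shows "w $ i \<le> disc_value x K c $ i"
proof -
  have "\<forall>i. 0 + x * (K *v (disc_value x K c - w))$i \<le> (disc_value x K c - w)$i"
    using assms(4) disc_value_fixpoint[OF assms(1-3), of c]
    by (auto simp: matrix_vector_mult_diff_distrib algebra_simps)
  from stochastic_min_principle[OF assms(1-3) this] show ?thesis by simp
qed

section \<open>Optimal deterministic policies\<close>

lemma stochastic_Ppi:
  assumes "is_kernel P" "is_policy pol" shows "stochastic (Ppi P pol)"
proof -
  have "(\<Sum>j\<in>UNIV. \<Sum>a\<in>UNIV. pol i a * P i a j) = 1" for i
    using assms by (subst sum.swap) (simp add: is_kernel_def is_policy_def sum_distrib_left[symmetric])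
  then show ?thesis using assms
    by (auto simp: stochastic_def Ppi_def is_kernel_def is_policy_def intro!: sum_nonneg)
qed

lemma Vpi_eq_disc_value: "Vpi x P r pol = disc_value x (Ppi P pol) (rpi r pol)"
  by (simp add: Vpi_def disc_value_def)

lemma rpi_plus_Ppi_mult:
  "rpi r pol $ s + x * (Ppi P pol *v w)$s
     = (\<Sum>a\<in>UNIV. pol s a * (r s a + x * (\<Sum>s'\<in>UNIV. P s a s' * w$s')))"
proof -
  have "(Ppi P pol *v w)$s = (\<Sum>s'\<in>UNIV. \<Sum>a\<in>UNIV. pol s a * P s a s' * w$s')"
    by (simp add: matrix_vector_mult_component Ppi_def sum_distrib_right)
  also have "\<dots> = (\<Sum>a\<in>UNIV. pol s a * (\<Sum>s'\<in>UNIV. P s a s' * w$s'))"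
    by (subst sum.swap) (simp add: sum_distrib_left mult.assoc)
  finally show ?thesis
    by (simp add: rpi_def distrib_left sum.distrib sum_distrib_left algebra_simps)
qed

lemma policy_average_le:
  assumes "is_policy pol" "\<forall>a. f a \<le> c" shows "(\<Sum>a\<in>UNIV. pol s a * f a) \<le> c"
proof -
  have "(\<Sum>a\<in>UNIV. pol s a * f a) \<le> (\<Sum>a\<in>UNIV. pol s a * c)"
    using assms by (intro sum_mono mult_left_mono) (auto simp: is_policy_def)
  also have "\<dots> = c" using assms by (simp add: is_policy_def sum_distrib_right[symmetric])
  finally show ?thesis .
qed

definition det_policy :: "('s \<Rightarrow> 'a) \<Rightarrow> 's \<Rightarrow> 'a \<Rightarrow> real" where
  "det_policy d s a = (if a = d s then 1 else 0)"

lemma is_policy_det_policy: "is_policy (det_policy (d::'s::finite \<Rightarrow> 'a::finite))"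
  by (simp add: is_policy_def det_policy_def)

lemma rpi_plus_Ppi_mult_det_policy:
  "rpi r (det_policy d) $ s + x * (Ppi P (det_policy d) *v w)$s
     = r s (d s) + x * (\<Sum>s'\<in>UNIV. P s (d s) s' * w$s')"
proof -
  have "(\<Sum>a\<in>UNIV. det_policy d s a * (r s a + x * (\<Sum>s'\<in>UNIV. P s a s' * w$s')))
      = (\<Sum>a\<in>UNIV. if a = d s then r s a + x * (\<Sum>s'\<in>UNIV. P s a s' * w$s') else 0)"
    by (rule sum.cong) (auto simp: det_policy_def)
  then show ?thesis unfolding rpi_plus_Ppi_mult by (simp add: sum.delta')
qed

lemma Vpi_det_policy_fixpoint:
  assumes "is_kernel P" "0 \<le> x" "x < 1"
  shows "Vpi x P r (det_policy d) $ s
           = r s (d s) + x * (\<Sum>s'\<in>UNIV. P s (d s) s' * Vpi x P r (det_policy d) $ s')"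
  unfolding Vpi_eq_disc_value rpi_plus_Ppi_mult_det_policy[symmetric]
  by (rule disc_value_fixpoint[OF stochastic_Ppi[OF assms(1) is_policy_det_policy] assms(2,3)])

lemma Bellman_optimality_of_maximal_det_policy:
  fixes P :: "'s::finite \<Rightarrow> 'a::finite \<Rightarrow> 's \<Rightarrow> real"
  assumes "is_kernel P" "0 \<le> x" "x < 1"
    and maximal: "\<And>d'. (\<Sum>t\<in>UNIV. Vpi x P r (det_policy d') $ t) \<le> (\<Sum>t\<in>UNIV. Vpi x P r (det_policy d) $ t)"
  shows "r s a + x * (\<Sum>s'\<in>UNIV. P s a s' * Vpi x P r (det_policy d) $ s') \<le> Vpi x P r (det_policy d) $ s"
proof (rule ccontr)
  define V where "V = Vpi x P r (det_policy d)"
  assume "\<not> ?thesis"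
  then have improves: "V$s < r s a + x * (\<Sum>s'\<in>UNIV. P s a s' * V$s')" unfolding V_def by simp
  define d' where "d' = d(s := a)"
  define V' where "V' = Vpi x P r (det_policy d')"
  have "V$t \<le> V'$t" for t
    unfolding V'_def Vpi_eq_disc_value
  proof (rule disc_value_ge_subsolution[OF stochastic_Ppi[OF assms(1) is_policy_det_policy] assms(2,3)], rule allI)
    fix i show "V$i \<le> rpi r (det_policy d') $ i + x * (Ppi P (det_policy d') *v V) $ i"
      unfolding rpi_plus_Ppi_mult_det_policy V_def
      using improves Vpi_det_policy_fixpoint[OF assms(1-3), of r d i] by (cases "i = s") (auto simp: d'_def V_def)
  qed
  moreover have "V$s < V'$s"
  proof -
    have "(\<Sum>s'\<in>UNIV. P s a s' * V$s') \<le> (\<Sum>s'\<in>UNIV. P s a s' * V'$s')"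
      using assms(1) \<open>\<And>t. V$t \<le> V'$t\<close> by (intro sum_mono mult_left_mono) (auto simp: is_kernel_def)
    then show ?thesis
      using improves Vpi_det_policy_fixpoint[OF assms(1-3), of r d' s] assms(2) mult_left_mono
      unfolding V'_def d'_def by fastforce
  qed
  ultimately have "(\<Sum>t\<in>UNIV. V$t) < (\<Sum>t\<in>UNIV. V'$t)"
    by (intro sum_strict_mono_ex1) auto
  with maximal[of d'] show False unfolding V_def V'_def by simp
qed

lemma optimal_det_policy_exists:
  fixes P :: "'s::finite \<Rightarrow> 'a::finite \<Rightarrow> 's \<Rightarrow> real"
  assumes "is_kernel P" "0 \<le> x" "x < 1"
  shows "\<exists>d. \<forall>\<sigma>. is_policy \<sigma> \<longrightarrow> (\<forall>s. Vpi x P r \<sigma> $ s \<le> Vpi x P r (det_policy d) $ s)"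
proof -
  define F where "F d = (\<Sum>t\<in>UNIV. Vpi x P r (det_policy d) $ t)" for d :: "'s \<Rightarrow> 'a"
  obtain d where "F d = Max (range F)"
    using Max_in[of "range F"] by (auto simp del: Max_in)
  then have maximal: "F d' \<le> F d" for d' by simp
  show ?thesis
  proof (intro exI allI impI)
    fix \<sigma> :: "'s \<Rightarrow> 'a \<Rightarrow> real" and s assume \<sigma>: "is_policy \<sigma>"
    have "disc_value x (Ppi P \<sigma>) (rpi r \<sigma>) $ s \<le> Vpi x P r (det_policy d) $ s"
    proof (rule disc_value_le_supersolution[OF stochastic_Ppi[OF assms(1) \<sigma>] assms(2,3)], rule allI)
      fix i show "rpi r \<sigma> $ i + x * (Ppi P \<sigma> *v Vpi x P r (det_policy d)) $ i \<le> Vpi x P r (det_policy d) $ i"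
        unfolding rpi_plus_Ppi_mult
        using \<sigma> Bellman_optimality_of_maximal_det_policy[OF assms maximal[unfolded F_def]]
        by (intro policy_average_le) auto
    qed
    then show "Vpi x P r \<sigma> $ s \<le> Vpi x P r (det_policy d) $ s" by (simp add: Vpi_eq_disc_value)
  qed
qed

section \<open>Dependence on the discount factor\<close>

definition det_poly :: "('n::finite \<Rightarrow> 'n \<Rightarrow> real poly) \<Rightarrow> real poly" where
  "det_poly M = (\<Sum>p\<in>{p. p permutes (UNIV::'n set)}. of_int (sign p) * (\<Prod>i\<in>UNIV. M i (p i)))"

lemma poly_det_poly: "poly (det_poly M) x = det (\<chi> i j. poly (M i j) x)"
  by (simp add: det_poly_def det_def poly_sum poly_prod)

definition I_minus_X_poly :: "real^'n::finite^'n \<Rightarrow> 'n \<Rightarrow> 'n \<Rightarrow> real poly" where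
  "I_minus_X_poly K i j = [: (if i = j then 1 else 0), - K$i$j :]"

lemma poly_I_minus_X_poly: "poly (I_minus_X_poly K i j) x = (mat 1 - x *\<^sub>R K)$i$j"
  by (simp add: I_minus_X_poly_def mat_def algebra_simps)

definition disc_value_denom :: "real^'n::finite^'n \<Rightarrow> real poly" where
  "disc_value_denom K = det_poly (I_minus_X_poly K)"

definition disc_value_numer :: "real^'n::finite^'n \<Rightarrow> real^'n \<Rightarrow> 'n \<Rightarrow> real poly" where
  "disc_value_numer K c k = det_poly (\<lambda>i j. if j = k then [: c$i :] else I_minus_X_poly K i j)"

lemma poly_disc_value_denom: "poly (disc_value_denom K) x = det (mat 1 - x *\<^sub>R K)"
  unfolding disc_value_denom_def poly_det_poly by (simp only: poly_I_minus_X_poly vec_lambda_eta)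

lemma disc_value_rational:
  fixes K :: "real^'n::finite^'n"
  assumes "stochastic K" "0 \<le> x" "x < 1"
  shows "disc_value x K c $ k = poly (disc_value_numer K c k) x / poly (disc_value_denom K) x"
proof -
  have "poly (disc_value_numer K c k) x = det (\<chi> i j. if j = k then c$i else (mat 1 - x *\<^sub>R K)$i$j)"
    unfolding disc_value_numer_def poly_det_poly
    by (rule arg_cong[where f=det]) (simp add: vec_eq_iff poly_I_minus_X_poly)
  then show ?thesis
    unfolding poly_disc_value_denom using cramer[OF det_I_minus_scaled_stochastic_nonzero[OF assms]] disc_value_solves[OF assms, of c]
    by simp
qed

lemma disc_value_denom_pos:
  fixes K :: "real^'n::finite^'n"
  assumes "stochastic K" "0 \<le> x" "x < 1"
  shows "0 < poly (disc_value_denom K) x"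
proof (rule ccontr)
  assume "\<not> ?thesis"
  moreover have "poly (disc_value_denom K) 0 = 1" by (simp add: poly_disc_value_denom)
  moreover have "continuous_on {0..x} (poly (disc_value_denom K))"
    by (intro continuous_on_poly continuous_on_id)
  ultimately obtain z where "0 \<le> z" "z \<le> x" "poly (disc_value_denom K) z = 0"
    using IVT2'[of "poly (disc_value_denom K)" x 0 0] assms(2) by auto
  with det_I_minus_scaled_stochastic_nonzero[OF assms(1)] assms(3) show False
    by (simp add: poly_disc_value_denom)
qed

lemma continuous_on_disc_value:
  fixes K :: "real^'n::finite^'n"
  assumes "stochastic K"
  shows "continuous_on {0..<1} (\<lambda>x. disc_value x K c $ k)"
proof -
  have "continuous_on {0..<1} (\<lambda>x. poly (disc_value_numer K c k) x / poly (disc_value_denom K) x)"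
    using disc_value_denom_pos[OF assms]
    by (intro continuous_intros) (auto simp: less_imp_neq[symmetric])
  then show ?thesis
    by (rule continuous_on_cong[THEN iffD1, rotated 2]) (auto simp: disc_value_rational[OF assms])
qed

lemma tendsto_Vpi_at_left:
  assumes "is_kernel P" "is_policy \<sigma>" "0 < g" "g < 1"
  shows "((\<lambda>x. Vpi x P r \<sigma> $ s) \<longlongrightarrow> Vpi g P r \<sigma> $ s) (at_left g)"
proof -
  have "isCont (\<lambda>x. Vpi x P r \<sigma> $ s) g"
    unfolding Vpi_eq_disc_value
    using continuous_on_interior[OF continuous_on_disc_value[OF stochastic_Ppi[OF assms(1,2)]]] assms(3,4)
    by simp
  then show ?thesis by (rule tendsto_within_subset[OF isContD]) simp
qed

lemma poly_sign_eventually_at_left: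
  fixes q :: "real poly"
  shows "(\<forall>\<^sub>F x in at_left g. 0 \<le> poly q x) \<or> (\<forall>\<^sub>F x in at_left g. poly q x < 0)"
proof (cases "q = 0")
  case False
  have "\<forall>\<^sub>F x in at_left g. \<forall>z\<in>{z. poly q z = 0}. x \<noteq> z"
    using poly_roots_finite[OF False] by (intro eventually_ball_finite) (auto intro: eventually_neq_at_within)
  then obtain b where "b < g" and nonzero: "\<And>y. b < y \<Longrightarrow> y < g \<Longrightarrow> poly q y \<noteq> 0"
    unfolding eventually_at_left_field by auto
  have connected: "connected (poly q ` {b<..<g})"
    by (intro connected_continuous_image continuous_on_poly continuous_on_id) simp
  have "(\<forall>y\<in>{b<..<g}. 0 \<le> poly q y) \<or> (\<forall>y\<in>{b<..<g}. poly q y < 0)"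
  proof (rule ccontr)
    assume "\<not> ?thesis"
    then obtain y1 y2 where "y1 \<in> {b<..<g}" "y2 \<in> {b<..<g}" "poly q y1 < 0" "0 \<le> poly q y2"
      by auto
    then have "0 \<in> poly q ` {b<..<g}"
      using connected unfolding connected_iff_interval by (meson imageI less_imp_le)
    then show False using nonzero by auto
  qed
  moreover have "\<forall>\<^sub>F x in at_left g. x \<in> {b<..<g}"
    by (rule eventually_at_left_real[OF \<open>b < g\<close>])
  ultimately show ?thesis by (metis (no_types, lifting) eventually_mono)
qed simp

lemma disc_value_diff_sign_eventually_at_left:
  fixes K1 K2 :: "real^'n::finite^'n"
  assumes "stochastic K1" "stochastic K2" "0 < g" "g \<le> 1"
  shows "(\<forall>\<^sub>F x in at_left g. 0 \<le> disc_value x K1 c1 $ k - disc_value x K2 c2 $ k)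
       \<or> (\<forall>\<^sub>F x in at_left g. disc_value x K1 c1 $ k - disc_value x K2 c2 $ k < 0)"
    (is "(\<forall>\<^sub>F x in _. 0 \<le> ?f x) \<or> _")
proof -
  define f where "f = ?f"
  define q where "q = disc_value_numer K1 c1 k * disc_value_denom K2 - disc_value_numer K2 c2 k * disc_value_denom K1"
  have same_sign: "(0 \<le> f x \<longleftrightarrow> 0 \<le> poly q x) \<and> (f x < 0 \<longleftrightarrow> poly q x < 0)"
    if "0 \<le> x" "x < 1" for x
  proof -
    define D where "D = poly (disc_value_denom K1) x * poly (disc_value_denom K2) x"
    have "0 < D"
      using disc_value_denom_pos[OF assms(1) that] disc_value_denom_pos[OF assms(2) that] by (simp add: D_def)
    moreover have "f x = poly q x / D"
      using disc_value_denom_pos[OF assms(1) that] disc_value_denom_pos[OF assms(2) that]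
      unfolding f_def q_def D_def disc_value_rational[OF assms(1) that] disc_value_rational[OF assms(2) that]
      by (simp add: field_simps)
    ultimately show ?thesis by (simp add: zero_le_divide_iff divide_less_0_iff)
  qed
  have equiv: "\<forall>\<^sub>F x in at_left g. (0 \<le> f x \<longleftrightarrow> 0 \<le> poly q x) \<and> (f x < 0 \<longleftrightarrow> poly q x < 0)"
    using eventually_at_left_real[OF assms(3)]
    by (rule eventually_mono) (use assms(4) same_sign in auto)
  consider "\<forall>\<^sub>F x in at_left g. 0 \<le> poly q x" | "\<forall>\<^sub>F x in at_left g. poly q x < 0"
    using poly_sign_eventually_at_left[of q g] by blast
  then show ?thesis
  proof cases
    case 1
    with equiv have "\<forall>\<^sub>F x in at_left g. 0 \<le> f x" by eventually_elim auto
    then show ?thesis unfolding f_def by simp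
  next
    case 2
    with equiv have "\<forall>\<^sub>F x in at_left g. f x < 0" by eventually_elim auto
    then show ?thesis unfolding f_def by simp
  qed
qed

section \<open>Blackwell optimality\<close>

lemma optimal_det_policy_eventually_at_left:
  fixes P :: "'s::finite \<Rightarrow> 'a::finite \<Rightarrow> 's \<Rightarrow> real"
  assumes "is_kernel P" "0 < g" "g \<le> 1"
  shows "\<exists>d. \<forall>\<^sub>F x in at_left g. \<forall>\<sigma>. is_policy \<sigma> \<longrightarrow> (\<forall>s. Vpi x P r \<sigma> $ s \<le> Vpi x P r (det_policy d) $ s)"
proof -
  define D where "D x d d' s = Vpi x P r (det_policy d) $ s - Vpi x P r (det_policy d') $ s"
    for x and d d' :: "'s \<Rightarrow> 'a" and s
  define c where "c d d' s \<longleftrightarrow> (\<forall>\<^sub>F x in at_left g. 0 \<le> D x d d' s)" for d d' s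
  txt \<open>Every comparison between two deterministic policies has eventually constant sign, so a
    policy optimal at one discount close to \<open>g\<close> stays optimal up to \<open>g\<close>.\<close>
  have "\<forall>\<^sub>F x in at_left g. 0 \<le> D x d d' s \<longleftrightarrow> c d d' s" for d d' s
  proof (cases "c d d' s")
    case True
    then show ?thesis unfolding c_def by (auto elim: eventually_mono)
  next
    case False
    then have "\<forall>\<^sub>F x in at_left g. D x d d' s < 0"
      using disc_value_diff_sign_eventually_at_left[OF stochastic_Ppi[OF assms(1) is_policy_det_policy]
          stochastic_Ppi[OF assms(1) is_policy_det_policy] assms(2,3)]
      unfolding c_def D_def Vpi_eq_disc_value by blast
    with False show ?thesis by (auto elim: eventually_mono)
  qed
  then have "\<forall>\<^sub>F x in at_left g. x \<in> {0<..<g} \<and> (\<forall>d d' s. 0 \<le> D x d d' s \<longleftrightarrow> c d d' s)"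
    using eventually_at_left_real[OF assms(2)] by (intro eventually_conj eventually_all_finite)
  then obtain x0 where "x0 < g"
    and stable: "\<And>x. x0 < x \<Longrightarrow> x < g \<Longrightarrow> 0 < x \<and> (\<forall>d d' s. 0 \<le> D x d d' s \<longleftrightarrow> c d d' s)"
    unfolding eventually_at_left_field by auto
  define x1 where "x1 = (x0 + g) / 2"
  have x1: "x0 < x1" "x1 < g" using \<open>x0 < g\<close> by (auto simp: x1_def)
  obtain d where d: "\<And>\<sigma> s. is_policy \<sigma> \<Longrightarrow> Vpi x1 P r \<sigma> $ s \<le> Vpi x1 P r (det_policy d) $ s"
    using optimal_det_policy_exists[OF assms(1), of x1 r] stable[OF x1] x1 assms(3) by auto
  have "Vpi x P r \<sigma> $ s \<le> Vpi x P r (det_policy d) $ s"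
    if x: "x0 < x" "x < g" and \<sigma>: "is_policy \<sigma>" for x \<sigma> s
  proof -
    obtain d' where d': "\<And>\<sigma> s. is_policy \<sigma> \<Longrightarrow> Vpi x P r \<sigma> $ s \<le> Vpi x P r (det_policy d') $ s"
      using optimal_det_policy_exists[OF assms(1), of x r] stable[OF x] x(2) assms(3) by auto
    have "c d d' s"
      using stable[OF x1] d[OF is_policy_det_policy, of d' s] by (simp add: D_def)
    then have "Vpi x P r (det_policy d') $ s \<le> Vpi x P r (det_policy d) $ s"
      using stable[OF x] by (simp add: D_def)
    with d'[OF \<sigma>, of s] show ?thesis by simp
  qed
  then show ?thesis
    using eventually_at_left_real[OF \<open>x0 < g\<close>] by (intro exI[of _ d]) (auto elim!: eventually_mono)
qed

lemma blackwell_optimal_exists: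
  fixes Q :: "'s::finite \<Rightarrow> 'a::finite \<Rightarrow> 's \<Rightarrow> real"
  assumes "is_kernel Q"
  shows "\<exists>pol. blackwell_optimal Q r pol"
proof -
  obtain d where "\<forall>\<^sub>F x in at_left 1. \<forall>\<sigma>. is_policy \<sigma> \<longrightarrow> (\<forall>s. Vpi x Q r \<sigma> $ s \<le> Vpi x Q r (det_policy d) $ s)"
    using optimal_det_policy_eventually_at_left[OF assms, of 1] by auto
  then show ?thesis
    unfolding blackwell_optimal_def eventually_at_left_field using is_policy_det_policy by blast
qed

section \<open>The anchored MDP\<close>

lemma is_kernel_anchored:
  assumes "is_kernel P" "1 \<le> n" shows "is_kernel (anchored n s0 P)"
proof -
  have "(\<Sum>s'\<in>UNIV. (1 - 1 / real n) * P s a s' + 1 / real n * (if s' = s0 then 1 else 0)) = 1" for s a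
    using assms(1)
    by (simp add: sum.distrib sum_distrib_left[symmetric] is_kernel_def sum_divide_distrib[symmetric])
  moreover have "0 \<le> 1 - 1 / real n" using assms(2) by simp
  ultimately show ?thesis using assms unfolding is_kernel_def anchored_def
    by (auto intro!: add_nonneg_nonneg mult_nonneg_nonneg)
qed

lemma Ppi_anchored_mult:
  assumes "is_policy pol"
  shows "(Ppi (anchored n s0 P) pol *v w)$s = (1 - 1/real n) * (Ppi P pol *v w)$s + (1/real n) * w$s0"
proof -
  have entry: "Ppi (anchored n s0 P) pol $ s $ s'
      = (1 - 1/real n) * Ppi P pol $ s $ s' + (1/real n) * (if s' = s0 then 1 else 0)" for s'
  proof -
    have "Ppi (anchored n s0 P) pol $ s $ s' = (\<Sum>a\<in>UNIV. pol s a * ((1 - 1/real n) * P s a s'))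
        + (\<Sum>a\<in>UNIV. pol s a) * (1/real n * (if s' = s0 then 1 else 0))"
      by (simp add: Ppi_def anchored_def distrib_left sum.distrib sum_distrib_right sum_divide_distrib[symmetric])
    then show ?thesis
      using assms by (simp add: is_policy_def Ppi_def sum_distrib_left algebra_simps)
  qed
  have "(Ppi (anchored n s0 P) pol *v w)$s
      = (\<Sum>j\<in>UNIV. (1 - 1/real n) * (Ppi P pol $ s $ j * w$j) + (if j = s0 then (1/real n) * w$j else 0))"
    unfolding matrix_vector_mult_component entry by (rule sum.cong) (auto simp: algebra_simps)
  then show ?thesis
    by (simp add: sum.distrib sum.delta' matrix_vector_mult_component sum_distrib_left)
qed

lemma Vpi_anchored:
  fixes P :: "'s::finite \<Rightarrow> 'a::finite \<Rightarrow> 's \<Rightarrow> real"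
  assumes "is_kernel P" "is_policy \<sigma>" "1 \<le> n" "0 \<le> \<beta>" "\<beta> < 1"
  defines "x \<equiv> \<beta> * (1 - 1/real n)"
  shows "Vpi \<beta> (anchored n s0 P) r \<sigma> $ s = Vpi x P r \<sigma> $ s + \<beta> / (real n * (1 - \<beta>)) * Vpi x P r \<sigma> $ s0"
proof -
  define k where "k = \<beta> / (real n * (1 - \<beta>))"
  define u where "u = Vpi x P r \<sigma>"
  have x: "0 \<le> x" "x < 1"
    using assms(3-5) unfolding x_def by (auto intro: mult_nonneg_nonneg le_less_trans[OF mult_left_le_one_le])
  have "stochastic (Ppi P \<sigma>)" using stochastic_Ppi[OF assms(1,2)] .
  have u: "u$i = rpi r \<sigma> $ i + x * (Ppi P \<sigma> *v u)$i" for i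
    unfolding u_def Vpi_eq_disc_value by (rule disc_value_fixpoint[OF stochastic_Ppi[OF assms(1,2)] x])
  have "u + (k * u$s0) *\<^sub>R 1 = Vpi \<beta> (anchored n s0 P) r \<sigma>"
    unfolding Vpi_eq_disc_value
  proof (subst disc_value_iff[OF stochastic_Ppi[OF is_kernel_anchored[OF assms(1,3)] assms(2)] assms(4,5)],
      rule allI)
    fix i
    have "k * (1 - \<beta>) = \<beta> / real n"
      using assms(3,5) by (simp add: k_def)
    then have "k * u$s0 = (\<beta> * k + \<beta> / real n) * u$s0"
      by (simp add: algebra_simps)
    then have "k * u$s0 = \<beta> * (k * u$s0) + \<beta> * u$s0 / real n"
      by (simp add: algebra_simps)
    then show "(u + (k * u$s0) *\<^sub>R 1)$i
        = rpi r \<sigma> $ i + \<beta> * (Ppi (anchored n s0 P) \<sigma> *v (u + (k * u$s0) *\<^sub>R 1))$i"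
      unfolding Ppi_anchored_mult[OF assms(2)] stochastic_mult_add_const[OF \<open>stochastic (Ppi P \<sigma>)\<close>]
      using u[of i] unfolding x_def by (simp add: algebra_simps)
  qed
  from this[symmetric] show ?thesis by (simp add: u_def k_def)
qed

lemma le_if_anchored_le:
  fixes v w :: "'s \<Rightarrow> real"
  assumes "\<And>t. w t \<le> v t" "\<And>t. v t + k * v s0 \<le> w t + k * w s0" "0 \<le> k"
  shows "v t \<le> w t"
proof -
  have "(1 + k) * v s0 \<le> (1 + k) * w s0"
    using assms(2)[of s0] by (simp add: algebra_simps)
  then have "v s0 = w s0" using assms(1)[of s0] \<open>0 \<le> k\<close> by (simp add: order.antisym)
  then show ?thesis using assms(2)[of t] by simp
qed

lemma blackwell_optimal_anchored_is_optimal: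
  fixes P :: "'s::finite \<Rightarrow> 'a::finite \<Rightarrow> 's \<Rightarrow> real"
  assumes "is_kernel P" "2 \<le> n" "blackwell_optimal (anchored n s0 P) r b" "is_policy \<sigma>"
  shows "Vpi (1 - 1/real n) P r \<sigma> $ s \<le> Vpi (1 - 1/real n) P r b $ s"
proof -
  define g where "g = 1 - 1/real n"
  have g: "0 < g" "g < 1" using assms(2) unfolding g_def by auto
  have b: "is_policy b" using assms(3) by (simp add: blackwell_optimal_def)
  obtain L where "L < 1" and L: "\<And>\<beta> \<sigma> s. L < \<beta> \<Longrightarrow> \<beta> < 1 \<Longrightarrow> is_policy \<sigma> \<Longrightarrow>
      Vpi \<beta> (anchored n s0 P) r \<sigma> $ s \<le> Vpi \<beta> (anchored n s0 P) r b $ s"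
    using assms(3) unfolding blackwell_optimal_def by blast
  have "Vpi x P r \<sigma> $ t \<le> Vpi x P r b $ t" if x: "max L 0 * g < x" "x < g" for x t
  proof -
    have "L * g < x" using x(1) mult_right_mono[OF max.cobounded1[of L 0] less_imp_le[OF g(1)]] by linarith
    have "0 \<le> x" using x(1) mult_right_mono[OF max.cobounded2[of 0 L] less_imp_le[OF g(1)]] by linarith
    define \<beta> where "\<beta> = x / g"
    have \<beta>: "L < \<beta>" "0 \<le> \<beta>" "\<beta> < 1" "\<beta> * g = x"
      using \<open>L * g < x\<close> \<open>0 \<le> x\<close> x(2) g unfolding \<beta>_def by (auto simp: field_simps)
    define k where "k = \<beta> / (real n * (1 - \<beta>))"
    have "0 \<le> k" using \<beta> unfolding k_def by simp
    obtain d where d: "\<And>\<sigma> s. is_policy \<sigma> \<Longrightarrow> Vpi x P r \<sigma> $ s \<le> Vpi x P r (det_policy d) $ s"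
      using optimal_det_policy_exists[OF assms(1) \<open>0 \<le> x\<close>, of r] x(2) g(2) by auto
    have anchored: "Vpi \<beta> (anchored n s0 P) r pol $ s = Vpi x P r pol $ s + k * Vpi x P r pol $ s0"
      if "is_policy pol" for pol s
      using assms(2) \<beta>(4) unfolding g_def k_def
      by (simp add: Vpi_anchored[OF assms(1) that _ \<beta>(2,3)])
    have "Vpi x P r (det_policy d) $ t \<le> Vpi x P r b $ t"
      by (rule le_if_anchored_le[of "\<lambda>t. Vpi x P r b $ t" _ k s0, OF d[OF b] _ \<open>0 \<le> k\<close>])
        (use L[OF \<beta>(1,3) is_policy_det_policy] anchored[OF is_policy_det_policy] anchored[OF b] in metis)
    with d[OF assms(4)] show ?thesis by (rule order.trans)
  qed
  then have "\<forall>\<^sub>F x in at_left g. Vpi x P r \<sigma> $ s \<le> Vpi x P r b $ s"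
    using eventually_at_left_real[of "max L 0 * g" g] \<open>L < 1\<close> g
    by (auto elim!: eventually_mono simp: max_mult_distrib_right)
  from tendsto_le[OF trivial_limit_at_left_real tendsto_Vpi_at_left[OF assms(1) b g]
      tendsto_Vpi_at_left[OF assms(1,4) g] this]
  show ?thesis unfolding g_def .
qed

section \<open>Bias of the anchored MDP\<close>

lemma cesaro_lim_eqI:
  fixes X :: "nat \<Rightarrow> real^'n::finite"
  assumes "\<And>T. norm (\<Sum>t<T. X t - L) \<le> C"
  shows "cesaro_lim X = L"
proof -
  have mean: "(1/real T) *\<^sub>R (\<Sum>t<T. X t) = L + (1/real T) *\<^sub>R (\<Sum>t<T. X t - L)" if "T > 0" for T
    using that by (simp add: sum_subtractf scaleR_diff_right sum_constant_scaleR del: sum_constant)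
  have "(\<lambda>T. (1/real T) *\<^sub>R (\<Sum>t<T. X t - L)) \<longlonglongrightarrow> 0"
  proof (rule Lim_null_comparison)
    show "\<forall>\<^sub>F T in sequentially. norm ((1/real T) *\<^sub>R (\<Sum>t<T. X t - L)) \<le> C * (1 / real T)"
      using assms by (auto intro!: always_eventually simp: divide_simps mult.commute)
    show "(\<lambda>T. C * (1 / real T)) \<longlonglongrightarrow> 0"
      using tendsto_mult[OF tendsto_const lim_1_over_n, of C] by simp
  qed
  then have "(\<lambda>T. L + (1/real T) *\<^sub>R (\<Sum>t<T. X t - L)) \<longlonglongrightarrow> L"
    using tendsto_add[OF tendsto_const, of _ 0 sequentially L] by simp
  then have "(\<lambda>T. (1/real T) *\<^sub>R (\<Sum>t<T. X t)) \<longlonglongrightarrow> L"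
    by (rule Lim_transform_eventually) (auto intro!: eventually_sequentiallyI[of 1] simp: mean)
  then show ?thesis unfolding cesaro_lim_def by (rule limI)
qed

lemma norm_le_card_mult_if_components_le:
  fixes v :: "real^'n::finite"
  assumes "\<And>i. \<bar>v$i\<bar> \<le> B"
  shows "norm v \<le> real CARD('n) * B"
proof -
  have "norm v \<le> (\<Sum>i\<in>UNIV. \<bar>v$i\<bar>)" by (rule norm_le_l1_cart)
  also have "\<dots> \<le> (\<Sum>i\<in>(UNIV::'n set). B)" using assms by (rule sum_mono)
  finally show ?thesis by simp
qed

lemma cesaro_lim_of_geometric_convergence:
  fixes w :: "nat \<Rightarrow> real^'n::finite"
  assumes "0 \<le> g" "g < 1" and converge: "\<And>t i. \<bar>w t $ i - l\<bar> \<le> g^t * C"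
  shows "cesaro_lim (\<lambda>t. w t - w (Suc t) + \<rho> *\<^sub>R 1) = \<rho> *\<^sub>R 1"
    and "cesaro_lim (\<lambda>T. w 0 - w T) = w 0 - l *\<^sub>R 1"
proof -
  have "0 \<le> C" using converge[of 0 undefined] by simp
  show "cesaro_lim (\<lambda>t. w t - w (Suc t) + \<rho> *\<^sub>R 1) = \<rho> *\<^sub>R 1"
  proof (rule cesaro_lim_eqI)
    fix T
    have "\<bar>(w 0 - w T)$i\<bar> \<le> Max (range (\<lambda>i. \<bar>w 0 $ i - l\<bar>)) + C" for i
    proof -
      have "g^T * C \<le> C" using \<open>0 \<le> C\<close> assms(1,2) by (simp add: mult_left_le_one_le power_le_one)
      moreover have "\<bar>w 0 $ i - l\<bar> \<le> Max (range (\<lambda>i. \<bar>w 0 $ i - l\<bar>))" by simp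
      ultimately show ?thesis using converge[of T i] by (simp add: abs_le_iff)
    qed
    then show "norm (\<Sum>t<T. w t - w (Suc t) + \<rho> *\<^sub>R 1 - \<rho> *\<^sub>R 1)
        \<le> real CARD('n) * (Max (range (\<lambda>i. \<bar>w 0 $ i - l\<bar>)) + C)"
      by (simp add: sum_lessThan_telescope' norm_le_card_mult_if_components_le)
  qed
  show "cesaro_lim (\<lambda>T. w 0 - w T) = w 0 - l *\<^sub>R 1"
  proof (rule cesaro_lim_eqI)
    fix N
    have "\<bar>(\<Sum>T<N. w 0 - w T - (w 0 - l *\<^sub>R 1))$i\<bar> \<le> C / (1 - g)" for i
    proof -
      have "\<bar>(\<Sum>T<N. w 0 - w T - (w 0 - l *\<^sub>R 1))$i\<bar> \<le> (\<Sum>T<N. \<bar>w T $ i - l\<bar>)"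
        using sum_abs[of "\<lambda>T. l - w T $ i" "{..<N}"] by (simp add: sum_component abs_minus_commute)
      also have "\<dots> \<le> (\<Sum>T<N. g^T) * C"
        unfolding sum_distrib_right by (intro sum_mono converge)
      also have "\<dots> = (1 - g^N) * C / (1 - g)"
        using assms(2) by (simp add: sum_gp_strict)
      also have "\<dots> \<le> C / (1 - g)"
        using assms(1,2) \<open>0 \<le> C\<close> by (intro divide_right_mono) (simp_all add: algebra_simps)
      finally show ?thesis .
    qed
    then show "norm (\<Sum>T<N. w 0 - w T - (w 0 - l *\<^sub>R 1)) \<le> real CARD('n) * (C / (1 - g))"
      by (rule norm_le_card_mult_if_components_le)
  qed
qed

lemma stochastic_iterates_converge_geometrically:
  fixes K :: "real^'n::finite^'n"
  assumes "stochastic K" "0 \<le> g"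
    and contraction: "\<And>v. sp_norm (\<lambda>i. (K *v v)$i) \<le> g * sp_norm (\<lambda>i. v$i)"
  shows "\<exists>l. \<forall>t i. \<bar>(((*v) K ^^ t) u) $ i - l\<bar> \<le> g^t * sp_norm (\<lambda>i. u$i)"
proof -
  define w where "w t = ((*v) K ^^ t) u" for t
  define M where "M t = Max (range (\<lambda>i. w t $ i))" for t
  define m where "m t = Min (range (\<lambda>i. w t $ i))" for t
  have w_between: "m t \<le> w t $ i" "w t $ i \<le> M t" for t i unfolding M_def m_def by auto
  have "decseq M"
    by (rule decseq_SucI) (simp add: M_def w_def Max_le_iff stochastic_mult_le_Max[OF assms(1)])
  have "incseq m"
    by (rule incseq_SucI) (simp add: m_def w_def Min_ge_iff stochastic_mult_ge_Min[OF assms(1)])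
  have spread: "M t - m t \<le> g^t * sp_norm (\<lambda>i. u$i)" for t
  proof (induction t)
    case 0 then show ?case by (simp add: M_def m_def w_def sp_norm_def)
  next
    case (Suc t)
    have "M (Suc t) - m (Suc t) \<le> g * (M t - m t)"
      using contraction[of "w t"] by (simp add: M_def m_def w_def sp_norm_def)
    also have "\<dots> \<le> g * (g^t * sp_norm (\<lambda>i. u$i))"
      using Suc \<open>0 \<le> g\<close> by (rule mult_left_mono)
    finally show ?case by simp
  qed
  define l where "l = (SUP t. m t)"
  have m_le_M: "m t' \<le> M t" for t t'
  proof -
    have "m t' \<le> m (max t t')" using \<open>incseq m\<close> by (simp add: incseqD)
    also have "\<dots> \<le> M (max t t')" using w_between[of "max t t'" undefined] by linarith
    also have "\<dots> \<le> M t" using \<open>decseq M\<close> by (simp add: decseqD)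
    finally show ?thesis .
  qed
  have "bdd_above (range m)" using m_le_M[of _ 0] by (meson bdd_aboveI2)
  then have l: "m t \<le> l" "l \<le> M t" for t
    unfolding l_def using m_le_M by (auto intro: cSUP_upper cSUP_least)
  have "\<bar>w t $ i - l\<bar> \<le> g^t * sp_norm (\<lambda>i. u$i)" for t i
    using w_between[of t i] l[of t] spread[of t] by (simp add: abs_le_iff)
  then show ?thesis unfolding w_def by blast
qed

lemma bias_eq_of_poisson_equation:
  assumes "stochastic (Ppi Q pol)" "0 \<le> g" "g < 1"
    and poisson: "rpi r pol = u - Ppi Q pol *v u + \<rho> *\<^sub>R 1"
    and converge: "\<And>t i. \<bar>(((*v) (Ppi Q pol) ^^ t) u) $ i - l\<bar> \<le> g^t * C"
  shows "bias Q r pol = u - l *\<^sub>R 1"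
proof -
  define f where "f = (*v) (Ppi Q pol)"
  define w where "w t = (f ^^ t) u" for t
  have "(f ^^ t) (a - c + q *\<^sub>R 1) = (f ^^ t) a - (f ^^ t) c + q *\<^sub>R 1" for t a c q
    by (induction t) (simp_all add: f_def matrix_vector_mult_diff_distrib matrix_vector_right_distrib
        matrix_vector_mult_scaleR stochastic_mult_one[OF assms(1)])
  then have iterate: "(f ^^ t) (rpi r pol) = w t - w (Suc t) + \<rho> *\<^sub>R 1" for t
    unfolding poisson w_def by (simp add: f_def funpow_swap1)
  have "(\<Sum>t<T. (f ^^ t) (rpi r pol) - \<rho> *\<^sub>R 1) = w 0 - w T" for T
    unfolding iterate by (simp add: sum_lessThan_telescope')
  moreover have "w 0 = u" by (simp add: w_def)
  moreover have "\<bar>w t $ i - l\<bar> \<le> g^t * C" for t i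
    using converge unfolding w_def f_def .
  note limits = cesaro_lim_of_geometric_convergence[OF assms(2,3) this]
  ultimately show ?thesis
    unfolding bias_def Let_def f_def[symmetric] iterate limits(1) by (simp add: limits(2))
qed

lemma sp_norm_Ppi_anchored_contraction:
  assumes "is_kernel P" "is_policy b" "1 \<le> n"
  shows "sp_norm (\<lambda>i. (Ppi (anchored n s0 P) b *v v)$i) \<le> (1 - 1/real n) * sp_norm (\<lambda>i. v$i)"
proof -
  let ?K = "Ppi (anchored n s0 P) b" and ?P = "Ppi P b"
  obtain i where i: "(?K *v v)$i = Max (range (\<lambda>i. (?K *v v)$i))"
    using Max_in[of "range (\<lambda>i. (?K *v v)$i)"] by (auto simp del: Max_in)
  obtain j where j: "(?K *v v)$j = Min (range (\<lambda>i. (?K *v v)$i))"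
    using Min_in[of "range (\<lambda>i. (?K *v v)$i)"] by (auto simp del: Min_in)
  have "sp_norm (\<lambda>i. (?K *v v)$i) = (?K *v v)$i - (?K *v v)$j"
    unfolding sp_norm_def i j ..
  also have "\<dots> = (1 - 1/real n) * ((?P *v v)$i - (?P *v v)$j)"
    unfolding Ppi_anchored_mult[OF assms(2)] by (simp add: algebra_simps)
  also have "\<dots> \<le> (1 - 1/real n) * sp_norm (\<lambda>i. v$i)"
    using stochastic_mult_le_Max[OF stochastic_Ppi[OF assms(1,2)], of v i]
      stochastic_mult_ge_Min[OF stochastic_Ppi[OF assms(1,2)], of v j] assms(3)
    unfolding sp_norm_def by (intro mult_left_mono) auto
  finally show ?thesis .
qed

lemma bias_anchored:
  fixes P :: "'s::finite \<Rightarrow> 'a::finite \<Rightarrow> 's \<Rightarrow> real"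
  assumes "is_kernel P" "1 \<le> n" "is_policy b"
  shows "\<exists>C. bias (anchored n s0 P) r b = Vpi (1 - 1/real n) P r b + C *\<^sub>R 1"
proof -
  define g where "g = 1 - 1/real n"
  have g: "0 \<le> g" "g < 1" using assms(2) unfolding g_def by auto
  let ?K = "Ppi (anchored n s0 P) b"
  have K: "stochastic ?K" using stochastic_Ppi[OF is_kernel_anchored[OF assms(1,2)] assms(3)] .
  define u where "u = Vpi g P r b"
  have "u$i = rpi r b $ i + g * (Ppi P b *v u)$i" for i
    unfolding u_def Vpi_eq_disc_value by (rule disc_value_fixpoint[OF stochastic_Ppi[OF assms(1,3)] g])
  txt \<open>The Poisson equation of the anchored chain, with gain \<open>u s0 / n\<close>.\<close>
  then have poisson: "rpi r b = u - ?K *v u + (u$s0 / real n) *\<^sub>R 1"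
    by (simp add: vec_eq_iff Ppi_anchored_mult[OF assms(3)] g_def algebra_simps)
  obtain l where "\<And>t i. \<bar>(((*v) ?K ^^ t) u) $ i - l\<bar> \<le> g^t * sp_norm (\<lambda>i. u$i)"
    using stochastic_iterates_converge_geometrically[OF K g(1)]
      sp_norm_Ppi_anchored_contraction[OF assms(1,3,2)] unfolding g_def by blast
  from bias_eq_of_poisson_equation[OF K g poisson this]
  show ?thesis by (intro exI[of _ "- l"]) (simp add: u_def g_def)
qed

lemma optimal_bias_anchored:
  fixes P :: "'s::finite \<Rightarrow> 'a::finite \<Rightarrow> 's \<Rightarrow> real"
  assumes "is_kernel P" "1 \<le> n"
  obtains b C where "blackwell_optimal (anchored n s0 P) r b"
    and "optimal_bias (anchored n s0 P) r = Vpi (1 - 1/real n) P r b + C *\<^sub>R 1"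
proof -
  define b where "b = (SOME pol. blackwell_optimal (anchored n s0 P) r pol)"
  have "blackwell_optimal (anchored n s0 P) r b"
    using blackwell_optimal_exists[OF is_kernel_anchored[OF assms]] unfolding b_def by (rule someI_ex)
  moreover from this have "is_policy b" by (simp add: blackwell_optimal_def)
  ultimately show ?thesis
    using that bias_anchored[OF assms] unfolding optimal_bias_def b_def[symmetric] by blast
qed

section \<open>Greedy policies\<close>

lemma sp_norm_add_const: "sp_norm (\<lambda>s. f s + (c::real)) = sp_norm (f :: 's::finite \<Rightarrow> real)"
  unfolding sp_norm_def
  using Max_add_commute[of "UNIV::'s set" f c] Min_add_commute[of "UNIV::'s set" f c] by simp

lemma greedy_policy_loss_bound:
  fixes P :: "'s::finite \<Rightarrow> 'a::finite \<Rightarrow> 's \<Rightarrow> real"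
  assumes "is_kernel P" "is_policy b" "is_policy pol" "0 \<le> g" "g < 1"
    and improves: "\<And>i. rpi r b $ i + g * (Ppi P b *v h)$i \<le> rpi r pol $ i + g * (Ppi P pol *v h)$i"
  shows "Vpi g P r b $ s - Vpi g P r pol $ s \<le> g / (1 - g) * sp_norm (\<lambda>t. Vpi g P r b $ t - h $ t)"
proof -
  let ?Vb = "Vpi g P r b" and ?Vp = "Vpi g P r pol"
  define S where "S = sp_norm (\<lambda>t. ?Vb $ t - h $ t)"
  have Pb: "stochastic (Ppi P b)" and Pp: "stochastic (Ppi P pol)"
    using stochastic_Ppi[OF assms(1)] assms(2,3) by auto
  have "\<forall>i. (?Vb - ?Vp)$i \<le> g * S + g * (Ppi P pol *v (?Vb - ?Vp))$i"
  proof
    fix i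
    have Vb: "?Vb$i = rpi r b $ i + g * (Ppi P b *v ?Vb)$i"
      unfolding Vpi_eq_disc_value by (rule disc_value_fixpoint[OF Pb assms(4,5)])
    have Vp: "?Vp$i = rpi r pol $ i + g * (Ppi P pol *v ?Vp)$i"
      unfolding Vpi_eq_disc_value by (rule disc_value_fixpoint[OF Pp assms(4,5)])
    have "(Ppi P b *v (?Vb - h))$i - (Ppi P pol *v (?Vb - h))$i \<le> S"
      using stochastic_mult_le_Max[OF Pb, of "?Vb - h" i] stochastic_mult_ge_Min[OF Pp, of "?Vb - h" i]
      unfolding S_def sp_norm_def by simp
    then have "g * ((Ppi P b *v (?Vb - h))$i - (Ppi P pol *v (?Vb - h))$i) \<le> g * S"
      using assms(4) by (rule mult_left_mono)
    then show "(?Vb - ?Vp)$i \<le> g * S + g * (Ppi P pol *v (?Vb - ?Vp))$i"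
      using Vb Vp improves[of i] by (simp add: algebra_simps)
  qed
  from stochastic_max_principle[OF Pp assms(4,5) this, of s] show ?thesis
    by (simp add: S_def)
qed

lemma policy_average_qval_anchored:
  assumes "is_policy pol"
  shows "(\<Sum>a\<in>UNIV. pol s a * qval r (anchored n s0 P) h s a)
         = rpi r pol $ s + (1 - 1/real n) * (Ppi P pol *v (\<chi> j. h j))$s + h s0 / real n"
  using rpi_plus_Ppi_mult[of r pol s 1 "anchored n s0 P" "\<chi> j. h j"]
  by (simp add: qval_def Ppi_anchored_mult[OF assms])

lemma greedy_anchored_policy_improvement:
  assumes "is_policy b" "is_policy pol" "greedy pol (qval r (anchored n s0 P) h)"
  shows "rpi r b $ i + (1 - 1/real n) * (Ppi P b *v (\<chi> j. h j))$i
           \<le> rpi r pol $ i + (1 - 1/real n) * (Ppi P pol *v (\<chi> j. h j))$i"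
proof -
  have "rpi r b $ i + (1 - 1/real n) * (Ppi P b *v (\<chi> j. h j))$i + h s0 / real n
      = (\<Sum>a\<in>UNIV. b i a * qval r (anchored n s0 P) h i a)"
    unfolding policy_average_qval_anchored[OF assms(1)] ..
  also have "\<dots> \<le> Max (range (qval r (anchored n s0 P) h i))"
    using assms(1) by (intro policy_average_le) (auto intro: Max_ge)
  also have "\<dots> = rpi r pol $ i + (1 - 1/real n) * (Ppi P pol *v (\<chi> j. h j))$i + h s0 / real n"
    using assms(3) unfolding greedy_def policy_average_qval_anchored[OF assms(2)] by simp
  finally show ?thesis by simp
qed

lemma Vstar_eq_Vpi_if_optimal:
  assumes "is_policy b" "\<And>\<sigma> s. is_policy \<sigma> \<Longrightarrow> Vpi g P r \<sigma> $ s \<le> Vpi g P r b $ s"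
  shows "Vstar g P r = Vpi g P r b"
  unfolding Vstar_def vec_eq_iff by (simp, intro allI cSup_eq_maximum) (use assms in auto)

theorem mainTheorem18:
  fixes P :: "'s::finite \<Rightarrow> 'a::finite \<Rightarrow> 's \<Rightarrow> real"
    and r :: "'s \<Rightarrow> 'a \<Rightarrow> real"
    and n :: nat and s0 :: 's
    and pol :: "'s \<Rightarrow> 'a \<Rightarrow> real" and h :: "'s \<Rightarrow> real"
  assumes "is_kernel P"
    and "\<forall>s a. 0 \<le> r s a \<and> r s a \<le> 1"
    and "n \<ge> 2"
    and "is_policy pol"
    and "greedy pol (qval r (anchored n s0 P) h)"
  shows "\<forall>s. Vstar (1 - 1 / real n) P r $ s - Vpi (1 - 1 / real n) P r pol $ s
             \<le> (real n - 1) * sp_norm (\<lambda>s'. optimal_bias (anchored n s0 P) r $ s' - h s')"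
proof
  fix s
  define g where "g = 1 - 1/real n"
  have g: "0 \<le> g" "g < 1" "g / (1 - g) = real n - 1" using assms(3) by (auto simp: g_def field_simps)
  obtain b C where blackwell: "blackwell_optimal (anchored n s0 P) r b"
    and bias: "optimal_bias (anchored n s0 P) r = Vpi g P r b + C *\<^sub>R 1"
    using optimal_bias_anchored[OF assms(1), of n s0 r] assms(3) unfolding g_def by auto
  have b: "is_policy b" using blackwell by (simp add: blackwell_optimal_def)
  have Vstar: "Vstar g P r = Vpi g P r b"
    using blackwell_optimal_anchored_is_optimal[OF assms(1,3) blackwell] unfolding g_def
    by (intro Vstar_eq_Vpi_if_optimal[OF b])
  have span: "sp_norm (\<lambda>t. optimal_bias (anchored n s0 P) r $ t - h t)
      = sp_norm (\<lambda>t. Vpi g P r b $ t - (\<chi> j. h j) $ t)"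
    using sp_norm_add_const[of "\<lambda>t. Vpi g P r b $ t - h t" C] by (simp add: bias algebra_simps)
  from greedy_policy_loss_bound[OF assms(1) b assms(4) g(1,2)
      greedy_anchored_policy_improvement[OF b assms(4,5), folded g_def], of s]
  show "Vstar (1 - 1 / real n) P r $ s - Vpi (1 - 1 / real n) P r pol $ s
      \<le> (real n - 1) * sp_norm (\<lambda>s'. optimal_bias (anchored n s0 P) r $ s' - h s')"
    unfolding g_def[symmetric] Vstar span g(3) .
qed

end
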